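(* Let $a,q,t_1,\dots,t_m$ be complex numbers ($m\ge1$), let $F(z)=(1-az)\prod_{i=1}^{m}(1-t_iz)=\sum_{n\ge0}a_nz^n$, and for $k\ge0$ let $F_k(z)=\sum_{i=0}^ka_iz^i$ (so $F_k=F$ for $k\ge m+1$). Then $$\prod_{i=1}^{m}(1-t_iz)=\sum_{n=0}^\infty\frac{c_nz^{n}}{1-azq^n}$$ in $\mathbb{C}[[z]]$, where $c_0=1$ and for $n\ge1$, $$c_n=\sum_{k=0}^{\min\{m,n-1\}}g_{n-k}(q)\,q^{(n-k)k}\,[z^{n}]\Big\{\prod_{i=1}^{m}(1-t_iz)-\frac{F_k(z)}{1-az}\Big\},$$ with polynomials $g_n(q)$ ($n\ge1$) defined recursively by $g_n(q)=1-\sum_{i=1}^{n-1}g_{n-i}(q)\,q^{(n-i)i}$.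
   Context: $[z^m]\{f\}$ denotes the coefficient of $z^m$ in the formal power series $f$; $1/(1-az)$ and $1/(1-azq^n)$ are expanded as geometric series in $z$. Empty sums are $0$. *)

theory Defs
  imports "HOL-Computational_Algebra.Formal_Power_Series"
begin

text \<open>The polynomials g_n(q), n \<ge> 1, evaluated at a complex number q:
  g_n(q) = 1 - sum_{i=1}^{n-1} g_{n-i}(q) q^{(n-i) i}.  (The value at n = 0 is irrelevant.)\<close>
function gpoly :: "complex \<Rightarrow> nat \<Rightarrow> complex" where
  "gpoly q n = 1 - (\<Sum>i\<in>{1..<n}. gpoly q (n - i) * q ^ ((n - i) * i))"
  by auto
termination
  by (relation "measure (\<lambda>(q, n). n)") auto

definition fps_trunc :: "'a::zero fps \<Rightarrow> nat \<Rightarrow> 'a fps" where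
  "fps_trunc F k = Abs_fps (\<lambda>i. if i \<le> k then fps_nth F i else 0)"

end

theory Submission
  imports Defs
begin

text \<open>
  Comparing coefficients of z^n reduces the expansion of F(z)/(1 - a z) in the functions
  z^j/(1 - a q^j z) to the identity  sum_{j<=n} c_j (a q^j)^(n-j) = sum_{i<=n} [z^i]F a^(n-i).
  Since [z^j]((F - F_k)/(1 - a z)) = sum_{k<i<=j} [z^i]F a^(j-i), the coefficient of
  [z^i]F a^(n-i) on the left is sum_{j=i..n} H(j,i) q^(j(n-j)), where
  H(j,i) = sum_{k<i} g_{j-k} q^((j-k)k) consists of the last i terms of the sum
  sum_{l=1..j} g_l q^(l(j-l)), which is 1 by the recursion for g.  By induction on i this
  coefficient is 1.  For the corollary take F = (1 - a z) prod_i (1 - t_i z): as F has degree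
  m + 1, the terms with k > m vanish.
\<close>

unbundle fps_syntax

declare gpoly.simps[simp del]

lemma sum_gpoly_power_eq_1:
  assumes "M \<ge> 1"
  shows "(\<Sum>l=1..M. gpoly q l * q ^ (l * (M - l))) = 1"
proof -
  have "(\<Sum>i=1..<M. gpoly q (M - i) * q ^ ((M - i) * i)) = (\<Sum>l=1..<M. gpoly q l * q ^ (l * (M - l)))"
    by (rule sum.reindex_bij_witness[where i="\<lambda>l. M - l" and j="\<lambda>i. M - i"]) auto
  moreover have "{1..M} = insert M {1..<M}"
    using assms by auto
  ultimately show ?thesis
    by (simp add: gpoly.simps[of q M])
qed

definition gpoly_partial_sum :: "complex \<Rightarrow> nat \<Rightarrow> nat \<Rightarrow> complex" where
  "gpoly_partial_sum q j i = (\<Sum>k<i. gpoly q (j - k) * q ^ ((j - k) * k))"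

lemma gpoly_partial_sum_diag:
  assumes "i \<ge> 1"
  shows "gpoly_partial_sum q i i = 1"
proof -
  have "gpoly_partial_sum q i i = (\<Sum>l=1..i. gpoly q l * q ^ (l * (i - l)))"
    unfolding gpoly_partial_sum_def
    by (rule sum.reindex_bij_witness[where i="\<lambda>l. i - l" and j="\<lambda>k. i - k"]) (auto simp: mult.commute)
  with sum_gpoly_power_eq_1[OF assms] show ?thesis
    by simp
qed

lemma power_exponent_shift:
  assumes "l + i \<le> (n::nat)"
  shows "l * i + (l + i) * (n - (l + i)) = i * (n - i) + l * (n - (i + l))"
proof -
  obtain r where "n = l + i + r"
    using assms le_Suc_ex by blast
  then show ?thesis
    by (simp add: algebra_simps)
qed

lemma sum_gpoly_partial_sum_eq_1:
  assumes "1 \<le> i" "i \<le> n"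
  shows "(\<Sum>j=i..n. gpoly_partial_sum q j i * q ^ (j * (n - j))) = 1"
  using assms
proof (induction i rule: dec_induct)
  case base
  then show ?case
    using sum_gpoly_power_eq_1[of n q] by (simp add: gpoly_partial_sum_def)
next
  case (step i)
  have "(\<Sum>j=i..n. gpoly_partial_sum q j i * q ^ (j * (n - j)))
      = q ^ (i * (n - i)) + (\<Sum>j=Suc i..n. gpoly_partial_sum q j i * q ^ (j * (n - j)))"
    using step gpoly_partial_sum_diag[of i q] by (simp add: sum.atLeast_Suc_atMost)
  with step have prev_part: "(\<Sum>j=Suc i..n. gpoly_partial_sum q j i * q ^ (j * (n - j))) = 1 - q ^ (i * (n - i))"
    by (simp add: eq_diff_eq add.commute)
  have "(\<Sum>j=Suc i..n. gpoly q (j - i) * q ^ ((j - i) * i) * q ^ (j * (n - j)))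
      = (\<Sum>l=1..n-i. gpoly q l * q ^ (l * i) * q ^ ((l + i) * (n - (l + i))))"
    by (rule sum.reindex_bij_witness[where i="\<lambda>l. l + i" and j="\<lambda>j. j - i"]) auto
  also have "\<dots> = (\<Sum>l=1..n-i. q ^ (i * (n - i)) * (gpoly q l * q ^ (l * (n - i - l))))"
  proof (intro sum.cong refl)
    fix l
    assume "l \<in> {1..n-i}"
    then have "l + i \<le> n"
      by auto
    then have "q ^ (l * i) * q ^ ((l + i) * (n - (l + i))) = q ^ (i * (n - i)) * q ^ (l * (n - i - l))"
      unfolding power_add[symmetric] power_exponent_shift[OF \<open>l + i \<le> n\<close>] by simp
    then show "gpoly q l * q ^ (l * i) * q ^ ((l + i) * (n - (l + i)))
        = q ^ (i * (n - i)) * (gpoly q l * q ^ (l * (n - i - l)))"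
      by (simp add: mult_ac)
  qed
  also have "\<dots> = q ^ (i * (n - i))"
    using step sum_gpoly_power_eq_1[of "n - i" q] by (simp flip: sum_distrib_left)
  finally have new_part: "(\<Sum>j=Suc i..n. gpoly q (j - i) * q ^ ((j - i) * i) * q ^ (j * (n - j)))
      = q ^ (i * (n - i))" .
  have "gpoly_partial_sum q j (Suc i) = gpoly_partial_sum q j i + gpoly q (j - i) * q ^ ((j - i) * i)" for j
    by (simp add: gpoly_partial_sum_def)
  then show ?case
    using prev_part new_part by (simp add: distrib_right sum.distrib)
qed

lemma sum_triangle_swap:
  "(\<Sum>j=1..n. \<Sum>i=1..j. f i j) = (\<Sum>i=1..(n::nat). \<Sum>j=i..n. (f i j :: 'a::comm_monoid_add))"
  by (induction n) (simp_all add: sum.distrib)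

lemma sum_gpoly_mult_tail_sum:
  "(\<Sum>k<j. gpoly q (j - k) * q ^ ((j - k) * k) * (\<Sum>i\<in>{k<..j}. x i))
     = (\<Sum>i=1..j. x i * gpoly_partial_sum q j i)"
proof -
  have "(\<Sum>k<j. gpoly q (j - k) * q ^ ((j - k) * k) * (\<Sum>i\<in>{k<..j}. x i))
      = (\<Sum>k<j. \<Sum>i=Suc k..j. gpoly q (j - k) * q ^ ((j - k) * k) * x i)"
    by (simp only: atLeastSucAtMost_greaterThanAtMost sum_distrib_left)
  also have "\<dots> = (\<Sum>i\<le>j. \<Sum>k<i. gpoly q (j - k) * q ^ ((j - k) * k) * x i)"
    by (rule sum.nested_swap'[symmetric])
  also have "\<dots> = (\<Sum>i=1..j. x i * gpoly_partial_sum q j i)"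
    by (simp add: atMost_atLeast0 sum.atLeast_Suc_atMost gpoly_partial_sum_def sum_distrib_left
        mult.commute flip: One_nat_def)
  finally show ?thesis .
qed

lemma sum_q_geometric_coeffs_eq:
  fixes e c :: "nat \<Rightarrow> complex"
  assumes "c 0 = e 0"
    and "\<And>j. j \<ge> 1 \<Longrightarrow>
      c j = (\<Sum>k<j. gpoly q (j - k) * q ^ ((j - k) * k) * (\<Sum>i\<in>{k<..j}. e i * A ^ (j - i)))"
  shows "(\<Sum>j\<le>n. c j * (A * q ^ j) ^ (n - j)) = (\<Sum>i\<le>n. e i * A ^ (n - i))"
proof -
  have "(\<Sum>j=1..n. c j * (A * q ^ j) ^ (n - j))
      = (\<Sum>j=1..n. \<Sum>i=1..j. e i * A ^ (n - i) * (gpoly_partial_sum q j i * q ^ (j * (n - j))))"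
  proof (rule sum.cong[OF refl])
    fix j
    assume j: "j \<in> {1..n}"
    have "c j * (A * q ^ j) ^ (n - j)
        = (\<Sum>i=1..j. e i * A ^ (j - i) * gpoly_partial_sum q j i) * (A ^ (n - j) * q ^ (j * (n - j)))"
      using j assms(2) sum_gpoly_mult_tail_sum by (simp add: power_mult_distrib power_mult)
    also have "\<dots> = (\<Sum>i=1..j. e i * (A ^ (j - i) * A ^ (n - j)) * (gpoly_partial_sum q j i * q ^ (j * (n - j))))"
      by (simp only: sum_distrib_right) (simp add: mult_ac)
    also have "\<dots> = (\<Sum>i=1..j. e i * A ^ (n - i) * (gpoly_partial_sum q j i * q ^ (j * (n - j))))"
      using j by (intro sum.cong refl) (simp flip: power_add)
    finally show "c j * (A * q ^ j) ^ (n - j)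
        = (\<Sum>i=1..j. e i * A ^ (n - i) * (gpoly_partial_sum q j i * q ^ (j * (n - j))))" .
  qed
  also have "\<dots> = (\<Sum>i=1..n. \<Sum>j=i..n. e i * A ^ (n - i) * (gpoly_partial_sum q j i * q ^ (j * (n - j))))"
    by (rule sum_triangle_swap)
  also have "\<dots> = (\<Sum>i=1..n. e i * A ^ (n - i))"
    by (simp add: sum_gpoly_partial_sum_eq_1 flip: sum_distrib_left)
  finally show ?thesis
    using assms(1) by (simp add: atMost_atLeast0 sum.atLeast_Suc_atMost flip: One_nat_def)
qed

lemma sums_fpsI:
  fixes f :: "nat \<Rightarrow> 'a::ab_group_add fps"
  assumes "\<And>j n. n < j \<Longrightarrow> f j $ n = 0"
    and "\<And>n. (\<Sum>j\<le>n. f j $ n) = G $ n"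
  shows "f sums G"
  unfolding sums_def
proof (rule tendsto_fpsI)
  fix n
  have "(\<Sum>j<N. f j) $ n = G $ n" if "n < N" for N
  proof -
    have "(\<Sum>j<N. f j $ n) = (\<Sum>j\<le>n. f j $ n)"
      using that assms(1) by (intro sum.mono_neutral_right) auto
    then show ?thesis
      by (simp add: fps_sum_nth assms(2))
  qed
  then show "\<forall>\<^sub>F N in sequentially. (\<Sum>j<N. f j) $ n = G $ n"
    by (rule eventually_mono[OF eventually_gt_at_top])
qed

lemma inverse_one_minus_const_X:
  "inverse (1 - fps_const (b::'a::field_char_0) * fps_X) = Abs_fps (\<lambda>n. b ^ n)"
  using one_minus_const_fps_X_neg_power'[of 1 b] by simp

lemma fps_nth_mult_inverse_one_minus_const_X:
  "(G * inverse (1 - fps_const (b::'a::field_char_0) * fps_X)) $ n = (\<Sum>i\<le>n. G $ i * b ^ (n - i))"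
  by (simp add: inverse_one_minus_const_X fps_mult_nth atLeast0AtMost)

lemma fps_nth_const_X_power_mult_inverse:
  "(fps_const c * fps_X ^ j * inverse (1 - fps_const (b::'a::field_char_0) * fps_X)) $ n
     = (if j \<le> n then c * b ^ (n - j) else 0)"
  by (simp add: inverse_one_minus_const_X mult.assoc fps_X_power_mult_nth)

lemma fps_nth_sub_trunc_mult_inverse:
  "((F - fps_trunc F k) * inverse (1 - fps_const (b::'a::field_char_0) * fps_X)) $ n
     = (\<Sum>i\<in>{k<..n}. F $ i * b ^ (n - i))"
proof -
  have "((F - fps_trunc F k) * inverse (1 - fps_const b * fps_X)) $ n
      = (\<Sum>i\<le>n. if k < i then F $ i * b ^ (n - i) else 0)"
    by (auto simp: fps_nth_mult_inverse_one_minus_const_X fps_trunc_def intro!: sum.cong)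
  also have "\<dots> = (\<Sum>i\<in>{k<..n}. F $ i * b ^ (n - i))"
    by (rule sum.mono_neutral_cong_right) auto
  finally show ?thesis .
qed

lemma fps_trunc_eq_self:
  assumes "\<And>j. k < j \<Longrightarrow> F $ j = 0"
  shows "fps_trunc F k = F"
  using assms by (auto simp: fps_trunc_def fps_eq_iff)

theorem fps_q_geometric_expansion:
  fixes F :: "complex fps" and c :: "nat \<Rightarrow> complex"
  assumes "c 0 = F $ 0"
    and "\<And>n. n \<ge> 1 \<Longrightarrow> c n = (\<Sum>k<n. gpoly q (n - k) * q ^ ((n - k) * k) *
           ((F - fps_trunc F k) * inverse (1 - fps_const a * fps_X)) $ n)"
  shows "(\<lambda>n. fps_const (c n) * fps_X ^ n * inverse (1 - fps_const (a * q ^ n) * fps_X))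
           sums (F * inverse (1 - fps_const a * fps_X))"
proof (rule sums_fpsI)
  fix n
  have "(\<Sum>j\<le>n. (fps_const (c j) * fps_X ^ j * inverse (1 - fps_const (a * q ^ j) * fps_X)) $ n)
      = (\<Sum>j\<le>n. c j * (a * q ^ j) ^ (n - j))"
    by (simp add: fps_nth_const_X_power_mult_inverse)
  also have "\<dots> = (\<Sum>i\<le>n. F $ i * a ^ (n - i))"
    using assms by (intro sum_q_geometric_coeffs_eq) (simp_all add: fps_nth_sub_trunc_mult_inverse)
  also have "\<dots> = (F * inverse (1 - fps_const a * fps_X)) $ n"
    by (simp add: fps_nth_mult_inverse_one_minus_const_X)
  finally show "(\<Sum>j\<le>n. (fps_const (c j) * fps_X ^ j * inverse (1 - fps_const (a * q ^ j) * fps_X)) $ n)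
      = (F * inverse (1 - fps_const a * fps_X)) $ n" .
qed (simp add: fps_nth_const_X_power_mult_inverse)

lemma fps_nth_linear_factor_mult_eq_0:
  fixes G :: "'a::comm_ring_1 fps"
  assumes "\<And>j. d < j \<Longrightarrow> G $ j = 0" and "Suc d < n"
  shows "((1 - fps_const b * fps_X) * G) $ n = 0"
proof -
  have "(1 - fps_const b * fps_X) * G = G - fps_const b * (fps_X * G)"
    by (simp add: algebra_simps)
  then show ?thesis
    using assms by simp
qed

lemma prod_linear_factors_nth_0:
  "(\<Prod>i=1..(m::nat). 1 - fps_const (t i) * fps_X :: 'a::comm_ring_1 fps) $ 0 = 1"
  by (induction m) simp_all

lemma prod_linear_factors_nth_eq_0:
  "m < n \<Longrightarrow> (\<Prod>i=1..m. 1 - fps_const (t i) * fps_X :: 'a::comm_ring_1 fps) $ n = 0"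
proof (induction m arbitrary: n)
  case (Suc m)
  have "(\<Prod>i=1..Suc m. 1 - fps_const (t i) * fps_X)
      = (1 - fps_const (t (Suc m)) * fps_X) * (\<Prod>i=1..m. 1 - fps_const (t i) * fps_X :: 'a fps)"
    by (simp add: mult.commute)
  then show ?case
    using Suc by (simp only: fps_nth_linear_factor_mult_eq_0[of m])
qed simp

theorem corollary2p5:
  fixes a q :: complex and t :: "nat \<Rightarrow> complex" and m :: nat and c :: "nat \<Rightarrow> complex"
    and P F :: "complex fps"
  assumes "m \<ge> 1"
    and P_def: "P = (\<Prod>i=1..m. 1 - fps_const (t i) * fps_X)"
    and F_def: "F = (1 - fps_const a * fps_X) * P"
    and c0: "c 0 = 1"
    and cn: "\<And>n. n \<ge> 1 \<Longrightarrow> c n =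
      (\<Sum>k=0..min m (n - 1). gpoly q (n - k) * q ^ ((n - k) * k) *
         fps_nth (P - fps_trunc F k * inverse (1 - fps_const a * fps_X)) n)"
  shows "(\<lambda>n. fps_const (c n) * fps_X ^ n * inverse (1 - fps_const (a * q ^ n) * fps_X)) sums P"
proof -
  have P_eq: "P = F * inverse (1 - fps_const a * fps_X)"
    by (simp add: F_def mult.commute[of _ P] mult.assoc inverse_mult_eq_1')
  have F_0: "F $ 0 = 1"
    using prod_linear_factors_nth_0[of t m] by (simp add: F_def P_def)
  have P_high: "P $ j = 0" if "m < j" for j
    unfolding P_def using that by (rule prod_linear_factors_nth_eq_0)
  have F_high: "F $ j = 0" if "Suc m < j" for j
    unfolding F_def by (rule fps_nth_linear_factor_mult_eq_0[OF P_high that])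
  have "c n = (\<Sum>k<n. gpoly q (n - k) * q ^ ((n - k) * k) *
           ((F - fps_trunc F k) * inverse (1 - fps_const a * fps_X)) $ n)" if "n \<ge> 1" for n
    unfolding cn[OF that] P_eq
  proof (intro sum.mono_neutral_cong_left ballI)
    fix k
    assume "k \<in> {..<n} - {0..min m (n - 1)}"
    then have "fps_trunc F k = F"
      using F_high by (intro fps_trunc_eq_self) auto
    then show "gpoly q (n - k) * q ^ ((n - k) * k) *
        ((F - fps_trunc F k) * inverse (1 - fps_const a * fps_X)) $ n = 0"
      by simp
  qed (use that in \<open>auto simp: algebra_simps\<close>)
  then show ?thesis
    using fps_q_geometric_expansion[of c F q a] c0 F_0 P_eq by simp
qed

end
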